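(* Let $K$ be a field, $R=K[x,y,z]$, and let $a,b,c$ be pairwise relatively prime positive integers. Set $S=K[x^a,y^b,z^c]$ and $L=abc$. Then the ideal $\mathfrak{a}=S_{\ge L}$ of $S$ is normal, that is, $\mathfrak{a}^t=S_{\ge tL}$ for all $t\ge1$.
   Context: $S$ is graded as a subring of $R$ with the standard grading $\deg x=\deg y=\deg z=1$, so $\deg(x^{ua}y^{vb}z^{wc})=ua+vb+wc$. For an $\mathbb{N}$-graded ring $A$ and positive integer $t$, $A_{\ge t}=\bigoplus_{s\ge t}A_s$; thus $S_{\ge m}$ is the ideal of $S$ spanned by the monomials $x^{ua}y^{vb}z^{wc}$ ($u,v,w\in\mathbb{N}$) with $ua+vb+wc\ge m$. *)

theory Defs
  imports Main "HOL-Library.Poly_Mapping" "HOL-Library.Product_Plus"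
begin

text \<open>The polynomial ring R = K[x,y,z] is modelled as finitely supported maps
  from exponent triples (i,j,k) (standing for x^i y^j z^k) to coefficients in K,
  with convolution product (library Poly_Mapping).\<close>

type_synonym 'k poly3 = "(nat \<times> nat \<times> nat) \<Rightarrow>\<^sub>0 'k"

definition mdeg :: "nat \<times> nat \<times> nat \<Rightarrow> nat" where
  "mdeg e = (case e of (i, j, k) \<Rightarrow> i + j + k)"

definition subS :: "nat \<Rightarrow> nat \<Rightarrow> nat \<Rightarrow> ('k::field) poly3 set" where
  "subS a b c = {p. \<forall>e\<in>Poly_Mapping.keys p. \<exists>u v w. e = (u * a, v * b, w * c)}"

definition S_ge :: "nat \<Rightarrow> nat \<Rightarrow> nat \<Rightarrow> nat \<Rightarrow> ('k::field) poly3 set" where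
  "S_ge a b c m = {p \<in> subS a b c. \<forall>e\<in>Poly_Mapping.keys p. m \<le> mdeg e}"

definition ideal_mult :: "('r::comm_ring_1) set \<Rightarrow> 'r set \<Rightarrow> 'r set" where
  "ideal_mult I J = {(\<Sum>i<n. f i * g i) | (n::nat) (f::nat \<Rightarrow> 'r) (g::nat \<Rightarrow> 'r). \<forall>i<n. f i \<in> I \<and> g i \<in> J}"

primrec ideal_power :: "('r::comm_ring_1) set \<Rightarrow> 'r set \<Rightarrow> nat \<Rightarrow> 'r set" where
  "ideal_power A I 0 = A"
| "ideal_power A I (Suc t) = ideal_mult (ideal_power A I t) I"

end

theory Submission
  imports Defs
begin

(* The inclusion S_{>=L}^t \<subseteq> S_{>=tL} is immediate from degree additivity.  The
   converse is a statement about exponents only: a monomial x^{ua} y^{vb} z^{wc} of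
   degree at least 2L is divisible in S by a monomial of degree exactly L.  Using only
   two of the variables, e.g. x^{ac} and z^{ca}, one reaches degree acb = L as soon as
   u div c + w div a \<ge> b; if this fails for all three pairs of variables, summing the
   three resulting degree bounds gives ua + vb + wc < 2L. *)

text \<open>Two-variable step: inside K[x^a, z^c] the monomial x^{ua} z^{wc} is divisible by
  a monomial of degree exactly acn once u div c + w div a \<ge> n (use copies of x^{ac}
  and z^{ca}).\<close>

lemma pair_of_degree:
  fixes a c u w n :: nat
  assumes "n \<le> u div c + w div a"
  shows "\<exists>i k. i \<le> u \<and> k \<le> w \<and> i * a + k * c = a * c * n"
proof (intro exI conjI)
  define p where "p = min n (u div c)"
  have "c * p \<le> c * (u div c)" by (simp add: p_def)
  also have "\<dots> \<le> u" by (simp add: mult.commute div_times_less_eq_dividend)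
  finally show "c * p \<le> u" .
  have "n - p \<le> w div a" using assms by (auto simp: p_def min_def)
  hence "a * (n - p) \<le> a * (w div a)" by simp
  also have "\<dots> \<le> w" by (simp add: mult.commute div_times_less_eq_dividend)
  finally show "a * (n - p) \<le> w" .
  have "p \<le> n" by (simp add: p_def)
  then obtain q where "n = p + q" using le_Suc_ex by blast
  then show "c * p * a + a * (n - p) * c = a * c * n"
    by (simp add: algebra_simps)
qed

lemma succ_le_mult_succ_div:
  fixes u c :: nat
  assumes "0 < c"
  shows "u + 1 \<le> c * (u div c + 1)"
proof -
  have "c * (u div c) + u mod c = u" by simp
  moreover have "u mod c < c" using assms by simp
  moreover have "c * (u div c + 1) = c * (u div c) + c" by simp
  ultimately show ?thesis by linarith
qed

lemma pair_degree_bound: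
  fixes a c u w n :: nat
  assumes "0 < a" "0 < c" "u div c + w div a < n"
  shows "u * a + w * c + a + c \<le> a * c * n + a * c"
proof -
  have "a * (u + 1) \<le> a * (c * (u div c + 1))"
    using succ_le_mult_succ_div[OF assms(2)] by (rule mult_le_mono2)
  moreover have "c * (w + 1) \<le> c * (a * (w div a + 1))"
    using succ_le_mult_succ_div[OF assms(1)] by (rule mult_le_mono2)
  moreover have "a * c * (u div c + w div a + 2) \<le> a * c * (n + 1)"
    using assms(3) by (intro mult_le_mono2) simp
  ultimately show ?thesis by (simp add: algebra_simps)
qed

lemma pairwise_products_bound:
  fixes a b c :: nat
  assumes "0 < a" "0 < b" "0 < c"
  shows "a * b + a * c + b * c + 1 \<le> a * b * c + a + b + c"
proof -
  have "0 \<le> (int a - 1) * (int b - 1) * (int c - 1)" using assms by simp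
  also have "\<dots> = int (a * b * c + a + b + c) - int (a * b + a * c + b * c + 1)"
    by (simp add: algebra_simps)
  finally show ?thesis by linarith
qed

lemma split_off_degree_abc:
  fixes a b c u v w :: nat
  assumes "0 < a" "0 < b" "0 < c" "2 * (a * b * c) \<le> u * a + v * b + w * c"
  shows "\<exists>i j k. i \<le> u \<and> j \<le> v \<and> k \<le> w \<and> i * a + j * b + k * c = a * b * c"
proof -
  consider "b \<le> u div c + w div a" | "c \<le> u div b + v div a" | "a \<le> v div c + w div b"
    | "u div c + w div a < b" "u div b + v div a < c" "v div c + w div b < a"
    by linarith
  then show ?thesis
  proof cases
    case 1
    then obtain i k where "i \<le> u" "k \<le> w" "i * a + k * c = a * c * b"
      using pair_of_degree by blast
    then show ?thesis by (intro exI[of _ i] exI[of _ 0] exI[of _ k]) (simp add: ac_simps)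
  next
    case 2
    then obtain i j where "i \<le> u" "j \<le> v" "i * a + j * b = a * b * c"
      using pair_of_degree by blast
    then show ?thesis by (intro exI[of _ i] exI[of _ j] exI[of _ 0]) simp
  next
    case 3
    then obtain j k where "j \<le> v" "k \<le> w" "j * b + k * c = b * c * a"
      using pair_of_degree by blast
    then show ?thesis by (intro exI[of _ 0] exI[of _ j] exI[of _ k]) (simp add: ac_simps)
  next
    case 4
    have "u * a + w * c + a + c \<le> a * c * b + a * c"
      using 4(1) assms(1,3) by (intro pair_degree_bound)
    moreover have "u * a + v * b + a + b \<le> a * b * c + a * b"
      using 4(2) assms(1,2) by (intro pair_degree_bound)
    moreover have "v * b + w * c + b + c \<le> b * c * a + b * c"
      using 4(3) assms(2,3) by (intro pair_degree_bound)
    moreover note pairwise_products_bound[OF assms(1-3)]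
    moreover have "a * c * b = a * b * c" "b * c * a = a * b * c" by simp_all
    ultimately have "u * a + v * b + w * c < 2 * (a * b * c)"
      by linarith
    with assms(4) show ?thesis by linarith
  qed
qed

definition Lat :: "nat \<Rightarrow> nat \<Rightarrow> nat \<Rightarrow> (nat \<times> nat \<times> nat) set" where
  "Lat a b c = {(u * a, v * b, w * c) | u v w. True}"

lemma Lat_add: "e \<in> Lat a b c \<Longrightarrow> f \<in> Lat a b c \<Longrightarrow> e + f \<in> Lat a b c"
  unfolding Lat_def by clarsimp (metis add_mult_distrib)

lemma mdeg_add: "mdeg (e + f) = mdeg e + mdeg f"
  by (cases e; cases f) (simp add: mdeg_def)

lemma S_ge_iff:
  "p \<in> S_ge a b c m \<longleftrightarrow> (\<forall>e\<in>Poly_Mapping.keys p. e \<in> Lat a b c \<and> m \<le> mdeg e)"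
  unfolding S_ge_def subS_def Lat_def by auto

lemma subS_eq_S_ge_0: "subS a b c = S_ge a b c 0"
  unfolding S_ge_def by auto

lemma single_in_S_ge: "e \<in> Lat a b c \<Longrightarrow> m \<le> mdeg e \<Longrightarrow> Poly_Mapping.single e v \<in> S_ge a b c m"
  by (simp add: S_ge_iff)

lemma one_in_subS: "(1 :: ('k::field) poly3) \<in> subS a b c"
proof -
  have "(0, 0, 0) \<in> Lat a b c" unfolding Lat_def by force
  thus ?thesis by (simp add: subS_eq_S_ge_0 S_ge_iff zero_prod_def)
qed

lemma sum_in_S_ge:
  assumes "\<And>i. i \<in> A \<Longrightarrow> f i \<in> S_ge a b c m"
  shows "sum f A \<in> S_ge a b c m"
  using keys_sum[of f A] assms unfolding S_ge_iff by blast

lemma mult_in_S_ge: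
  assumes "p \<in> S_ge a b c m" "q \<in> S_ge a b c n"
  shows "p * q \<in> S_ge a b c (m + n)"
  unfolding S_ge_iff
proof
  fix e assume "e \<in> Poly_Mapping.keys (p * q)"
  then obtain f g where "e = f + g" "f \<in> Poly_Mapping.keys p" "g \<in> Poly_Mapping.keys q"
    using keys_mult by blast
  with assms show "e \<in> Lat a b c \<and> m + n \<le> mdeg e"
    unfolding S_ge_iff by (force simp: mdeg_add Lat_add)
qed

lemma ideal_mult_S_ge_subset:
  assumes "I \<subseteq> S_ge a b c m" "J \<subseteq> S_ge a b c n"
  shows "ideal_mult I J \<subseteq> (S_ge a b c (m + n) :: ('k::field) poly3 set)"
proof
  fix p :: "'k poly3" assume "p \<in> ideal_mult I J"
  then obtain k and f g :: "nat \<Rightarrow> 'k poly3"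
    where "p = (\<Sum>i<k. f i * g i)" "\<forall>i<k. f i \<in> I \<and> g i \<in> J"
    unfolding ideal_mult_def by blast
  with assms show "p \<in> S_ge a b c (m + n)"
    by (auto intro!: sum_in_S_ge mult_in_S_ge)
qed

lemma sum_in_ideal_mult:
  fixes f g :: "'x \<Rightarrow> 'r::comm_ring_1"
  assumes "finite A" "\<And>x. x \<in> A \<Longrightarrow> f x \<in> I \<and> g x \<in> J"
  shows "(\<Sum>x\<in>A. f x * g x) \<in> ideal_mult I J"
proof -
  obtain h where h: "bij_betw h {..<card A} A"
    using ex_bij_betw_nat_finite[OF assms(1)] lessThan_atLeast0 by metis
  have "(\<Sum>x\<in>A. f x * g x) = (\<Sum>i<card A. f (h i) * g (h i))"
    using sum.reindex_bij_betw[OF h, of "\<lambda>x. f x * g x"] by simp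
  moreover have "\<forall>i<card A. f (h i) \<in> I \<and> g (h i) \<in> J"
    using h assms(2) by (auto dest: bij_betwE)
  ultimately show ?thesis
    unfolding ideal_mult_def by (intro CollectI exI[of _ "card A"] exI[of _ "f \<circ> h"] exI[of _ "g \<circ> h"]) simp
qed

lemma sum_single_lookup:
  "(\<Sum>e\<in>Poly_Mapping.keys p. Poly_Mapping.single e (Poly_Mapping.lookup p e)) = p"
proof (rule poly_mapping_eqI)
  fix x
  have "Poly_Mapping.lookup (\<Sum>e\<in>Poly_Mapping.keys p. Poly_Mapping.single e (Poly_Mapping.lookup p e)) x
      = (\<Sum>e\<in>Poly_Mapping.keys p. if e = x then Poly_Mapping.lookup p e else 0)"
    by (simp add: lookup_sum lookup_single when_def)
  also have "\<dots> = Poly_Mapping.lookup p x"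
    by (simp add: in_keys_iff)
  finally show "Poly_Mapping.lookup (\<Sum>e\<in>Poly_Mapping.keys p. Poly_Mapping.single e (Poly_Mapping.lookup p e)) x
      = Poly_Mapping.lookup p x" .
qed

lemma S_ge_subset_ideal_mult:
  assumes split: "\<And>e. e \<in> Lat a b c \<Longrightarrow> m + n \<le> mdeg e \<Longrightarrow>
      \<exists>f g. e = f + g \<and> f \<in> Lat a b c \<and> m \<le> mdeg f \<and> g \<in> Lat a b c \<and> n \<le> mdeg g"
  shows "S_ge a b c (m + n) \<subseteq> ideal_mult (S_ge a b c m) (S_ge a b c n :: ('k::field) poly3 set)"
proof
  fix p :: "'k poly3" assume p: "p \<in> S_ge a b c (m + n)"
  obtain F G where FG: "\<And>e. e \<in> Poly_Mapping.keys p \<Longrightarrow> e = F e + G e \<and>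
      F e \<in> Lat a b c \<and> m \<le> mdeg (F e) \<and> G e \<in> Lat a b c \<and> n \<le> mdeg (G e)"
    using split p unfolding S_ge_iff by metis
  have "p = (\<Sum>e\<in>Poly_Mapping.keys p.
              Poly_Mapping.single (F e) (Poly_Mapping.lookup p e) * Poly_Mapping.single (G e) 1)"
  proof -
    have "Poly_Mapping.single e (Poly_Mapping.lookup p e)
        = Poly_Mapping.single (F e) (Poly_Mapping.lookup p e) * Poly_Mapping.single (G e) 1"
      if "e \<in> Poly_Mapping.keys p" for e
      using FG[OF that] by (simp add: mult_single)
    then show ?thesis by (subst (1) sum_single_lookup[symmetric]) (rule sum.cong, simp_all)
  qed
  also have "\<dots> \<in> ideal_mult (S_ge a b c m) (S_ge a b c n)"
    using FG by (intro sum_in_ideal_mult) (auto intro: single_in_S_ge)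
  finally show "p \<in> ideal_mult (S_ge a b c m) (S_ge a b c n)" .
qed

lemma ideal_mult_subS_left: "ideal_mult (subS a b c) (S_ge a b c m) = (S_ge a b c m :: ('k::field) poly3 set)"
proof
  show "ideal_mult (subS a b c) (S_ge a b c m) \<subseteq> S_ge a b c m"
    using ideal_mult_S_ge_subset[of "subS a b c" a b c 0 "S_ge a b c m" m] by (simp add: subS_eq_S_ge_0)
  show "S_ge a b c m \<subseteq> ideal_mult (subS a b c) (S_ge a b c m :: 'k poly3 set)"
  proof
    fix p :: "'k poly3" assume "p \<in> S_ge a b c m"
    then have "(\<Sum>x\<in>{()}. 1 * p) \<in> ideal_mult (subS a b c) (S_ge a b c m)"
      using one_in_subS by (intro sum_in_ideal_mult) auto
    then show "p \<in> ideal_mult (subS a b c) (S_ge a b c m)" by simp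
  qed
qed

lemma Lat_split_off_abc:
  fixes a b c :: nat
  assumes "0 < a" "0 < b" "0 < c" "1 \<le> t"
    and e: "e \<in> Lat a b c" "t * (a * b * c) + a * b * c \<le> mdeg e"
  shows "\<exists>f g. e = f + g \<and> f \<in> Lat a b c \<and> t * (a * b * c) \<le> mdeg f
                \<and> g \<in> Lat a b c \<and> a * b * c \<le> mdeg g"
proof -
  obtain u v w where euvw: "e = (u * a, v * b, w * c)" using e(1) unfolding Lat_def by blast
  have "2 * (a * b * c) \<le> t * (a * b * c) + a * b * c" using assms(4) by simp
  moreover have "mdeg e = u * a + v * b + w * c" by (simp add: euvw mdeg_def)
  ultimately have "2 * (a * b * c) \<le> u * a + v * b + w * c" using e(2) by linarith
  then obtain i j k where ijk: "i \<le> u" "j \<le> v" "k \<le> w" "i * a + j * b + k * c = a * b * c"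
    using split_off_degree_abc assms(1-3) by blast
  define g where "g = (i * a, j * b, k * c)"
  define f where "f = ((u - i) * a, (v - j) * b, (w - k) * c)"
  have "e = f + g" using ijk by (simp add: euvw f_def g_def diff_mult_distrib)
  moreover have "mdeg g = a * b * c" using ijk(4) by (simp add: g_def mdeg_def)
  moreover have "f \<in> Lat a b c" "g \<in> Lat a b c" unfolding Lat_def f_def g_def by blast+
  moreover have "t * (a * b * c) \<le> mdeg f"
    using e(2) \<open>e = f + g\<close> \<open>mdeg g = a * b * c\<close> by (simp add: mdeg_add)
  ultimately show ?thesis by (intro exI[of _ f] exI[of _ g]) simp
qed

theorem mainTheorem17:
  fixes a b c :: nat
  assumes "0 < a" "0 < b" "0 < c"
    and "coprime a b" "coprime a c" "coprime b c"
    and "1 \<le> t"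
  shows "ideal_power (subS a b c) (S_ge a b c (a * b * c) :: ('k::field) poly3 set) t
           = S_ge a b c (t * (a * b * c))"
  using \<open>1 \<le> t\<close>
proof (induction t rule: dec_induct)
  case base
  show ?case using ideal_mult_subS_left by simp
next
  case (step s)
  let ?L = "a * b * c"
  have "ideal_power (subS a b c) (S_ge a b c ?L :: 'k poly3 set) (Suc s)
      = ideal_mult (S_ge a b c (s * ?L)) (S_ge a b c ?L)"
    using step.IH by simp
  also have "\<dots> = S_ge a b c (s * ?L + ?L)"
  proof
    show "ideal_mult (S_ge a b c (s * ?L)) (S_ge a b c ?L) \<subseteq> (S_ge a b c (s * ?L + ?L) :: 'k poly3 set)"
      by (rule ideal_mult_S_ge_subset) simp_all
    show "S_ge a b c (s * ?L + ?L) \<subseteq> ideal_mult (S_ge a b c (s * ?L)) (S_ge a b c ?L :: 'k poly3 set)"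
      using Lat_split_off_abc[OF assms(1-3) step.hyps(1)] by (intro S_ge_subset_ideal_mult)
  qed
  finally show ?case by (simp add: add.commute)
qed
end
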